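(* Let $\gamma(t)=\Phi(e^{it})$ be an analytic Jordan curve and $k\in\{0,1,2,\dots\}\cup\{\infty\}$. Then the set of $f\in C^k(\gamma^* )$ that are nowhere real analytic on $\gamma^*$ (i.e. real analytic at no point $\gamma(t_0)$, $t_0\in\mathbb{R}$) is a dense $G_\delta$ subset of $C^k(\gamma^* )$.
   Context: An analytic Jordan curve is $\gamma(t)=\Phi(e^{it})$, $t\in\mathbb{R}$, with $\Phi$ injective holomorphic on an annulus $\{\rho<|z|<R\}$, $0<\rho<1<R$; $\gamma^*$ is its image. $C^k(\gamma^* )$ is the space of $u:\gamma^*\to\mathbb{C}$ such that $\theta\mapsto u(\gamma(\theta))$ is $k$ times continuously differentiable on $\mathbb{R}$, with seminorms $\sup_{\theta\in\mathbb{R}}|\frac{d^l}{d\theta^l}u(\gamma(\theta))|$, integers $0\le l\le k$. A function $f:\gamma^*\to\mathbb{C}$ is real analytic at $\gamma(t_0)$ if there is a power series $\sum_{n\ge0}a_n(t-t_0)^n$ with radius of convergence $\delta>0$ such that $f(\gamma(t))=\sum_{n\ge0}a_n(t-t_0)^n$ for all $t\in(t_0-\delta,t_0+\delta)$. *)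

theory Defs
  imports "HOL-Analysis.Analysis" "HOL-Library.Extended_Nat"
begin

definition analytic_jordan_curve :: "(real \<Rightarrow> complex) \<Rightarrow> bool" where
  "analytic_jordan_curve \<gamma> \<longleftrightarrow>
     (\<exists>\<Phi> \<rho> R. 0 < \<rho> \<and> \<rho> < 1 \<and> 1 < R \<and>
        \<Phi> holomorphic_on {z. \<rho> < cmod z \<and> cmod z < R} \<and>
        inj_on \<Phi> {z. \<rho> < cmod z \<and> cmod z < R} \<and>
        (\<forall>t. \<gamma> t = \<Phi> (exp (\<i> * complex_of_real t))))"

fun iter_deriv :: "nat \<Rightarrow> (real \<Rightarrow> complex) \<Rightarrow> real \<Rightarrow> complex" where
  "iter_deriv 0 g = g"
| "iter_deriv (Suc n) g = (\<lambda>t. vector_derivative (iter_deriv n g) (at t))"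

definition Ck_real :: "enat \<Rightarrow> (real \<Rightarrow> complex) \<Rightarrow> bool" where
  "Ck_real k g \<longleftrightarrow>
     (\<forall>l. enat l \<le> k \<longrightarrow> continuous_on UNIV (iter_deriv l g)) \<and>
     (\<forall>l. enat (Suc l) \<le> k \<longrightarrow>
        (\<forall>t. (iter_deriv l g has_vector_derivative iter_deriv (Suc l) g t) (at t)))"

text \<open>The space C^k(gamma*): functions on gamma* (represented as functions on
  the complex plane that vanish off gamma*, so that each function on gamma*
  has exactly one representative) with theta |-> u (gamma theta) of class C^k.\<close>
definition Ck_curve :: "enat \<Rightarrow> (real \<Rightarrow> complex) \<Rightarrow> (complex \<Rightarrow> complex) set" where
  "Ck_curve k \<gamma> = {u. (\<forall>z. z \<notin> range \<gamma> \<longrightarrow> u z = 0) \<and> Ck_real k (\<lambda>\<theta>. u (\<gamma> \<theta>))}"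

definition seminorm_curve :: "(real \<Rightarrow> complex) \<Rightarrow> nat \<Rightarrow> (complex \<Rightarrow> complex) \<Rightarrow> real" where
  "seminorm_curve \<gamma> l u = (SUP \<theta>. norm (iter_deriv l (\<lambda>t. u (\<gamma> t)) \<theta>))"

definition Ck_nbhd :: "enat \<Rightarrow> (real \<Rightarrow> complex) \<Rightarrow> (complex \<Rightarrow> complex) \<Rightarrow> nat \<Rightarrow> real
    \<Rightarrow> (complex \<Rightarrow> complex) set" where
  "Ck_nbhd k \<gamma> u N \<epsilon> = {v \<in> Ck_curve k \<gamma>.
      \<forall>l. l \<le> N \<and> enat l \<le> k \<longrightarrow> seminorm_curve \<gamma> l (\<lambda>z. v z - u z) < \<epsilon>}"

definition Ck_open :: "enat \<Rightarrow> (real \<Rightarrow> complex) \<Rightarrow> (complex \<Rightarrow> complex) set \<Rightarrow> bool" where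
  "Ck_open k \<gamma> U \<longleftrightarrow> U \<subseteq> Ck_curve k \<gamma> \<and>
     (\<forall>u\<in>U. \<exists>N \<epsilon>. 0 < \<epsilon> \<and> Ck_nbhd k \<gamma> u N \<epsilon> \<subseteq> U)"

lemma istopology_Ck_open: "istopology (Ck_open k \<gamma>)"
  unfolding istopology_def
proof (intro conjI allI impI ballI)
  fix S T assume S: "Ck_open k \<gamma> S" and T: "Ck_open k \<gamma> T"
  show "Ck_open k \<gamma> (S \<inter> T)"
    unfolding Ck_open_def
  proof (intro conjI ballI)
    show "S \<inter> T \<subseteq> Ck_curve k \<gamma>" using S unfolding Ck_open_def by blast
  next
    fix u assume u: "u \<in> S \<inter> T"
    obtain N1 e1 where 1: "0 < e1" "Ck_nbhd k \<gamma> u N1 e1 \<subseteq> S"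
      using S u unfolding Ck_open_def by blast
    obtain N2 e2 where 2: "0 < e2" "Ck_nbhd k \<gamma> u N2 e2 \<subseteq> T"
      using T u unfolding Ck_open_def by blast
    have "Ck_nbhd k \<gamma> u (max N1 N2) (min e1 e2) \<subseteq> Ck_nbhd k \<gamma> u N1 e1"
         "Ck_nbhd k \<gamma> u (max N1 N2) (min e1 e2) \<subseteq> Ck_nbhd k \<gamma> u N2 e2"
      unfolding Ck_nbhd_def by (auto simp del: max_def)
    then have "Ck_nbhd k \<gamma> u (max N1 N2) (min e1 e2) \<subseteq> S \<inter> T"
      using 1 2 by blast
    moreover have "0 < min e1 e2" using 1 2 by simp
    ultimately show "\<exists>N \<epsilon>. 0 < \<epsilon> \<and> Ck_nbhd k \<gamma> u N \<epsilon> \<subseteq> S \<inter> T"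
      by blast
  qed
next
  fix K assume K: "\<forall>S\<in>K. Ck_open k \<gamma> S"
  show "Ck_open k \<gamma> (\<Union>K)"
    unfolding Ck_open_def
  proof (intro conjI ballI)
    show "\<Union>K \<subseteq> Ck_curve k \<gamma>" using K unfolding Ck_open_def by blast
  next
    fix u assume "u \<in> \<Union>K"
    then obtain S where S: "S \<in> K" "u \<in> S" by blast
    then have "Ck_open k \<gamma> S" using K by blast
    then obtain N \<epsilon> where "0 < \<epsilon>" "Ck_nbhd k \<gamma> u N \<epsilon> \<subseteq> S"
      using S(2) unfolding Ck_open_def by blast
    then have "0 < \<epsilon> \<and> Ck_nbhd k \<gamma> u N \<epsilon> \<subseteq> \<Union>K" using S(1) by blast
    then show "\<exists>N \<epsilon>. 0 < \<epsilon> \<and> Ck_nbhd k \<gamma> u N \<epsilon> \<subseteq> \<Union>K"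
      by blast
  qed
qed

definition Ck_topology :: "enat \<Rightarrow> (real \<Rightarrow> complex) \<Rightarrow> (complex \<Rightarrow> complex) topology" where
  "Ck_topology k \<gamma> = topology (Ck_open k \<gamma>)"

lemma openin_Ck_topology: "openin (Ck_topology k \<gamma>) U \<longleftrightarrow> Ck_open k \<gamma> U"
  unfolding Ck_topology_def using istopology_Ck_open by (simp add: topology_inverse')

definition real_analytic_at_curve ::
    "(real \<Rightarrow> complex) \<Rightarrow> (complex \<Rightarrow> complex) \<Rightarrow> real \<Rightarrow> bool" where
  "real_analytic_at_curve \<gamma> f t0 \<longleftrightarrow>
     (\<exists>a :: nat \<Rightarrow> complex. \<exists>\<delta>>0. \<forall>t. \<bar>t - t0\<bar> < \<delta> \<longrightarrow>
        (\<lambda>n. a n * complex_of_real ((t - t0) ^ n)) sums f (\<gamma> t))"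

end

theory Submission
  imports Defs "HOL-Complex_Analysis.Complex_Analysis"
begin

text \<open>Pull everything back to the \<open>2*pi\<close>-periodic parameter. A periodic function is real
  analytic somewhere iff for some \<open>m > 0\<close> it is given, near a point of \<open>[0, 2*pi]\<close>, by a
  power series of radius \<open>1 / (2*m)\<close> with coefficients bounded by \<open>m ^ (n+1)\<close>. For fixed \<open>m\<close>
  this is closed under pointwise limits, since centres and coefficient sequences range over a
  compact set; so its failure is open even for the sup norm, and the nowhere analytic
  functions form a countable intersection of open sets.

  For density, adding \<open>b * exp (\<i>*N*t)\<close> with \<open>N\<close> large and \<open>b\<close> small in \<open>C^k\<close> destroys the
  condition for a given \<open>m\<close>: were it to hold for \<open>L+1\<close> equally spaced values of \<open>b\<close>, two of
  the germs would have close centres, and continuing both into the complex plane shows that the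
  two values of \<open>b\<close> differ by \<open>O(exp (-N/(8*m)))\<close>. A convergent series of such perturbations,
  chosen one after another with shrinking margins, spoils all conditions at once.\<close>

section \<open>Periodic functions and the curve\<close>

definition periodic_2pi :: "(real \<Rightarrow> 'a) \<Rightarrow> bool" where
  "periodic_2pi h \<longleftrightarrow> (\<forall>t. h (t + 2*pi) = h t)"

lemma periodic_2pi_nat:
  assumes "periodic_2pi h"
  shows "h (t + 2 * pi * real n) = h t"
proof (induction n)
  case (Suc n)
  have "h (t + 2 * pi * real (Suc n)) = h ((t + 2 * pi * real n) + 2*pi)"
    by (simp add: algebra_simps)
  with Suc assms show ?case unfolding periodic_2pi_def by simp
qed simp

lemma periodic_2pi_int:
  assumes "periodic_2pi h"
  shows "h (t + 2 * pi * of_int n) = h t"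
proof (cases "n \<ge> 0")
  case True
  then show ?thesis using periodic_2pi_nat[OF assms, of t "nat n"] by simp
next
  case False
  then have "h (t + 2 * pi * of_int n + 2 * pi * real (nat (- n))) = h t" by simp
  then show ?thesis using periodic_2pi_nat[OF assms] by metis
qed

lemma ex_int_shift_into_period: "\<exists>n::int. t - 2 * pi * of_int n \<in> {0..<2*pi}"
proof
  define n where "n = \<lfloor>t / (2*pi)\<rfloor>"
  have "of_int n \<le> t / (2*pi)" "t / (2*pi) < of_int n + 1"
    unfolding n_def by linarith+
  then have "2*pi * of_int n \<le> t" "t < 2*pi * of_int n + 2*pi"
    by (simp_all add: field_simps)
  then show "t - 2 * pi * of_int n \<in> {0..<2*pi}" by auto
qed

lemma periodic_2pi_bounded:
  fixes h :: "real \<Rightarrow> 'a::real_normed_vector"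
  assumes "periodic_2pi h" "continuous_on UNIV h"
  shows "\<exists>B. \<forall>t. norm (h t) \<le> B"
proof -
  have "compact (h ` {0..2*pi})"
    by (rule compact_continuous_image) (use assms(2) continuous_on_subset in auto)
  then obtain B where B: "\<And>x. x \<in> h ` {0..2*pi} \<Longrightarrow> norm x \<le> B"
    using compact_imp_bounded bounded_iff by metis
  have "norm (h t) \<le> B" for t
  proof -
    obtain n::int where n: "t - 2 * pi * of_int n \<in> {0..<2*pi}"
      using ex_int_shift_into_period by blast
    have "h t = h (t - 2 * pi * of_int n)"
      using periodic_2pi_int[OF assms(1), of "t - 2 * pi * of_int n" n] by simp
    then show ?thesis using B n by auto
  qed
  then show ?thesis by blast
qed

definition harmonic :: "nat \<Rightarrow> real \<Rightarrow> complex" where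
  "harmonic N t = exp (\<i> * of_real (real N * t))"

lemma norm_harmonic [simp]: "norm (harmonic N t) = 1"
  by (simp add: harmonic_def norm_exp_eq_Re)

lemma periodic_2pi_harmonic: "periodic_2pi (harmonic N)"
  unfolding periodic_2pi_def
proof
  fix t
  have "\<i> * of_real (real N * (t + 2*pi)) = \<i> * of_real (real N * t) + of_nat N * (2 * pi * \<i>)"
    by (simp add: algebra_simps)
  then show "harmonic N (t + 2*pi) = harmonic N t"
    by (simp add: harmonic_def exp_add exp_of_nat_mult)
qed

lemma has_vector_derivative_harmonic:
  "(harmonic N has_vector_derivative (\<i> * of_nat N) * harmonic N t) (at t)"
proof -
  have "((\<lambda>z. exp (\<i> * of_nat N * z)) has_field_derivative
          (\<i> * of_nat N) * exp (\<i> * of_nat N * of_real t)) (at (of_real t))"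
    by (auto intro!: derivative_eq_intros)
  from has_vector_derivative_real_field[OF this]
  show ?thesis unfolding harmonic_def by (simp add: algebra_simps)
qed

lemma analytic_jordan_curve_periodic:
  assumes "analytic_jordan_curve \<gamma>"
  shows "periodic_2pi \<gamma>"
proof -
  have "exp (\<i> * complex_of_real t) = harmonic 1 t" for t by (simp add: harmonic_def)
  then show ?thesis
    using assms periodic_2pi_harmonic[of 1] unfolding analytic_jordan_curve_def periodic_2pi_def
    by metis
qed

lemma periodic_2pi_along_curve:
  assumes "analytic_jordan_curve \<gamma>"
  shows "periodic_2pi (\<lambda>t. u (\<gamma> t))"
  using analytic_jordan_curve_periodic[OF assms] unfolding periodic_2pi_def by simp

lemma analytic_jordan_curve_eqD:
  assumes "analytic_jordan_curve \<gamma>" "\<gamma> s = \<gamma> t"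
  shows "\<exists>n::int. s = t + 2 * pi * of_int n"
proof -
  obtain \<Phi> \<rho> R where r: "0 < \<rho>" "\<rho> < 1" "1 < R"
    and inj: "inj_on \<Phi> {z. \<rho> < cmod z \<and> cmod z < R}"
    and \<gamma>: "\<forall>t. \<gamma> t = \<Phi> (exp (\<i> * complex_of_real t))"
    using assms(1) unfolding analytic_jordan_curve_def by blast
  have "cmod (exp (\<i> * complex_of_real x)) = 1" for x
    by (simp add: norm_exp_eq_Re)
  then have "exp (\<i> * complex_of_real s) = exp (\<i> * complex_of_real t)"
    using inj_onD[OF inj] assms(2) \<gamma> r by auto
  then obtain n::int where "\<i> * complex_of_real s = \<i> * complex_of_real t + (of_int (2 * n) * pi) * \<i>"
    by (auto simp: exp_eq)
  then have "Im (\<i> * complex_of_real s) = Im (\<i> * complex_of_real t + (of_int (2 * n) * pi) * \<i>)"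
    by simp
  then show ?thesis by auto
qed

definition curve_lift :: "(real \<Rightarrow> complex) \<Rightarrow> (real \<Rightarrow> complex) \<Rightarrow> complex \<Rightarrow> complex" where
  "curve_lift \<gamma> g z = (if z \<in> range \<gamma> then g (SOME t. \<gamma> t = z) else 0)"

lemma curve_lift_along_curve:
  assumes "analytic_jordan_curve \<gamma>" "periodic_2pi g"
  shows "curve_lift \<gamma> g (\<gamma> t) = g t"
proof -
  have "\<gamma> (SOME s. \<gamma> s = \<gamma> t) = \<gamma> t" by (rule someI) simp
  then obtain n::int where "(SOME s. \<gamma> s = \<gamma> t) = t + 2 * pi * of_int n"
    using analytic_jordan_curve_eqD[OF assms(1)] by blast
  then show ?thesis unfolding curve_lift_def using periodic_2pi_int[OF assms(2)] by auto
qed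

lemma curve_lift_in_Ck_curve:
  assumes "analytic_jordan_curve \<gamma>" "periodic_2pi g" "Ck_real k g"
  shows "curve_lift \<gamma> g \<in> Ck_curve k \<gamma>"
proof -
  have "(\<lambda>\<theta>. curve_lift \<gamma> g (\<gamma> \<theta>)) = g" using curve_lift_along_curve[OF assms(1,2)] by auto
  then show ?thesis using assms(3) unfolding Ck_curve_def curve_lift_def by auto
qed

section \<open>The space \<open>C^k\<close> of the curve\<close>

lemma Ck_real_imp_continuous: "Ck_real k g \<Longrightarrow> continuous_on UNIV g"
  unfolding Ck_real_def by (metis iter_deriv.simps(1) zero_enat_def zero_le)

lemma iter_deriv_add:
  assumes f: "Ck_real k f" and g: "Ck_real k g" and l: "enat l \<le> k"
  shows "iter_deriv l (\<lambda>t. f t + g t) = (\<lambda>t. iter_deriv l f t + iter_deriv l g t)"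
  using l
proof (induction l)
  case (Suc l)
  then have IH: "iter_deriv l (\<lambda>t. f t + g t) = (\<lambda>t. iter_deriv l f t + iter_deriv l g t)"
    by (meson Suc_ile_eq order_less_imp_le)
  have "((\<lambda>t. iter_deriv l f t + iter_deriv l g t) has_vector_derivative
          iter_deriv (Suc l) f t + iter_deriv (Suc l) g t) (at t)" for t
    using f g Suc.prems unfolding Ck_real_def by (intro has_vector_derivative_add) auto
  then show ?case unfolding iter_deriv.simps IH by (auto intro!: vector_derivative_at)
qed simp

lemma Ck_real_add:
  assumes f: "Ck_real k f" and g: "Ck_real k g"
  shows "Ck_real k (\<lambda>t. f t + g t)"
  unfolding Ck_real_def
proof (intro conjI allI impI)
  fix l assume l: "enat l \<le> k"
  then show "continuous_on UNIV (iter_deriv l (\<lambda>t. f t + g t))"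
    using f g unfolding iter_deriv_add[OF f g l] Ck_real_def by (auto intro!: continuous_on_add)
next
  fix l t assume l: "enat (Suc l) \<le> k"
  moreover have l': "enat l \<le> k" using l by (meson Suc_ile_eq order_less_imp_le)
  ultimately show "(iter_deriv l (\<lambda>t. f t + g t) has_vector_derivative
               iter_deriv (Suc l) (\<lambda>t. f t + g t) t) (at t)"
    using l f g unfolding iter_deriv_add[OF f g l] iter_deriv_add[OF f g l'] Ck_real_def
    by (auto intro!: has_vector_derivative_add)
qed

lemma topspace_Ck_topology: "topspace (Ck_topology k \<gamma>) = Ck_curve k \<gamma>"
proof
  show "topspace (Ck_topology k \<gamma>) \<subseteq> Ck_curve k \<gamma>"
    using openin_topspace[of "Ck_topology k \<gamma>"] unfolding openin_Ck_topology Ck_open_def by blast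
  have "Ck_open k \<gamma> (Ck_curve k \<gamma>)"
    unfolding Ck_open_def Ck_nbhd_def by (auto intro!: exI[of _ "1::real"])
  then show "Ck_curve k \<gamma> \<subseteq> topspace (Ck_topology k \<gamma>)"
    by (intro openin_subset) (simp add: openin_Ck_topology)
qed

lemma seminorm_curve_le:
  assumes "\<And>\<theta>. norm (iter_deriv l (\<lambda>t. w (\<gamma> t)) \<theta>) \<le> B"
  shows "seminorm_curve \<gamma> l w \<le> B"
  unfolding seminorm_curve_def by (rule cSUP_least) (use assms in auto)

lemma norm_le_seminorm_curve_0:
  assumes "periodic_2pi (\<lambda>t. w (\<gamma> t))" "continuous_on UNIV (\<lambda>t. w (\<gamma> t))"
  shows "norm (w (\<gamma> \<theta>)) \<le> seminorm_curve \<gamma> 0 w"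
proof -
  obtain B where "\<And>t. norm (w (\<gamma> t)) \<le> B" using periodic_2pi_bounded[OF assms] by blast
  then show ?thesis unfolding seminorm_curve_def
    by (intro cSUP_upper2[of _ _ \<theta>]) (auto intro!: bdd_aboveI2)
qed

section \<open>Series of harmonics\<close>

lemma half_powers_sums: "(\<lambda>i. c / 2 ^ Suc i) sums (c :: real)"
  using sums_mult[OF power_half_series, of c] by (simp add: power_divide)

lemma summable_if_le_half_powers:
  fixes f :: "nat \<Rightarrow> 'a::banach"
  assumes "\<And>i. i \<ge> k \<Longrightarrow> norm (f i) \<le> c / 2 ^ Suc i"
  shows "summable f"
  by (rule summable_norm_cancel, rule summable_comparison_test'[OF sums_summable[OF half_powers_sums]])
     (use assms in auto)

definition harmonic_series :: "(nat \<Rightarrow> complex) \<Rightarrow> (nat \<Rightarrow> nat) \<Rightarrow> nat \<Rightarrow> real \<Rightarrow> complex" where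
  "harmonic_series b N l t = (\<Sum>i. b i * (\<i> * of_nat (N i)) ^ l * harmonic (N i) t)"

definition rapid_decay :: "(nat \<Rightarrow> complex) \<Rightarrow> (nat \<Rightarrow> nat) \<Rightarrow> bool" where
  "rapid_decay b N \<longleftrightarrow> (\<forall>l. summable (\<lambda>i. norm (b i) * real (N i) ^ l))"

lemma harmonic_series_0: "harmonic_series b N 0 t = (\<Sum>i. b i * harmonic (N i) t)"
  by (simp add: harmonic_series_def)

lemma norm_harmonic_series_term:
  "norm (b i * (\<i> * of_nat (N i)) ^ l * harmonic (N i) t) = norm (b i) * real (N i) ^ l"
  by (simp add: norm_mult norm_power)

lemma summable_harmonic_series_term:
  assumes "summable (\<lambda>i. norm (b i) * real (N i) ^ l)"
  shows "summable (\<lambda>i. b i * (\<i> * of_nat (N i)) ^ l * harmonic (N i) t)"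
  by (rule summable_norm_cancel, rule summable_comparison_test[OF _ assms])
     (auto simp: norm_harmonic_series_term)

lemma norm_harmonic_series_le:
  assumes "\<And>i. norm (b i) * real (N i) ^ l \<le> c / 2 ^ Suc i"
  shows "norm (harmonic_series b N l t) \<le> c"
proof -
  have sn: "summable (\<lambda>i. norm (b i * (\<i> * of_nat (N i)) ^ l * harmonic (N i) t))"
    by (rule summable_if_le_half_powers) (use assms in \<open>simp add: norm_harmonic_series_term\<close>)
  have "norm (harmonic_series b N l t)
          \<le> (\<Sum>i. norm (b i * (\<i> * of_nat (N i)) ^ l * harmonic (N i) t))"
    unfolding harmonic_series_def by (rule summable_norm[OF sn])
  also have "\<dots> \<le> (\<Sum>i. c / 2 ^ Suc i)"
    by (rule suminf_le[OF _ sn sums_summable[OF half_powers_sums]])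
       (use assms in \<open>simp add: norm_harmonic_series_term\<close>)
  finally show ?thesis using sums_unique[OF half_powers_sums] by simp
qed

lemma harmonic_series_0_split:
  assumes "summable (\<lambda>i. norm (b i))"
  shows "harmonic_series b N 0 t =
    (\<Sum>i<k. b i * harmonic (N i) t) + harmonic_series (\<lambda>i. b (i + k)) (\<lambda>i. N (i + k)) 0 t"
proof -
  have "summable (\<lambda>i. b i * harmonic (N i) t)"
    using summable_harmonic_series_term[of b N 0 t] assms by simp
  from suminf_split_initial_segment[OF this, of k] show ?thesis
    unfolding harmonic_series_0 by simp
qed

lemma norm_mult_power_mono:
  assumes "1 \<le> N" "l \<le> L"
  shows "norm b * real N ^ l \<le> norm b * real N ^ L"
  using assms by (intro mult_left_mono power_increasing) auto

lemma rapid_decay_if_le_half_powers: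
  assumes N: "\<And>i. N i \<ge> 1" and b: "\<And>i. norm (b i) * real (N i) ^ max M i \<le> c / 2 ^ Suc i"
  shows "rapid_decay b N"
  unfolding rapid_decay_def
proof
  fix l
  show "summable (\<lambda>i. norm (b i) * real (N i) ^ l)"
  proof (rule summable_if_le_half_powers[of l _ c])
    fix i assume "l \<le> i"
    then have "norm (b i) * real (N i) ^ l \<le> c / 2 ^ Suc i"
      by (intro order_trans[OF norm_mult_power_mono[OF N] b]) simp
    then show "norm (norm (b i) * real (N i) ^ l) \<le> c / 2 ^ Suc i" by simp
  qed
qed

lemma has_vector_derivative_harmonic_series:
  assumes "rapid_decay b N"
  shows "(harmonic_series b N l has_vector_derivative harmonic_series b N (Suc l) t) (at t)"
proof -
  have summ: "summable (\<lambda>i. norm (b i) * real (N i) ^ l)" for l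
    using assms unfolding rapid_decay_def by blast
  define f where "f i t = b i * (\<i> * of_nat (N i)) ^ l * harmonic (N i) t" for i t
  define d where "d i t = b i * (\<i> * of_nat (N i)) ^ Suc l * harmonic (N i) t" for i t
  have fd: "(f i has_derivative (\<lambda>h. h *\<^sub>R d i x)) (at x)" for i x
    using has_vector_derivative_mult_right[OF has_vector_derivative_harmonic,
        of "b i * (\<i> * of_nat (N i)) ^ l" "N i" x]
    unfolding f_def d_def has_vector_derivative_def by (simp add: algebra_simps)
  have ul: "uniform_limit UNIV (\<lambda>n x. \<Sum>i<n. d i x) (\<lambda>x. \<Sum>i. d i x) sequentially"
    by (rule Weierstrass_m_test[OF _ summ[of "Suc l"]]) (simp only: d_def norm_harmonic_series_term order_refl)
  have "\<exists>g. \<forall>x\<in>UNIV. (\<lambda>n. f n x) sums (g x) \<and>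
          (g has_derivative (\<lambda>h. h *\<^sub>R (\<Sum>i. d i x))) (at x within UNIV)"
  proof (rule has_derivative_series[where f' = "\<lambda>i x h. h *\<^sub>R d i x"])
    show "(\<lambda>n. f n 0) sums (\<Sum>i. f i 0)"
      unfolding f_def by (rule summable_sums, rule summable_harmonic_series_term[OF summ])
    show "\<forall>\<^sub>F n in sequentially. \<forall>x\<in>UNIV. \<forall>h.
            norm ((\<Sum>i<n. h *\<^sub>R d i x) - h *\<^sub>R (\<Sum>i. d i x)) \<le> e * norm h"
      if "e > 0" for e
      using uniform_limitD[OF ul that]
    proof (rule eventually_mono, intro ballI allI)
      fix n x and h :: real
      assume "\<forall>x\<in>UNIV. dist (\<Sum>i<n. d i x) (\<Sum>i. d i x) < e"
      then have "\<bar>h\<bar> * norm ((\<Sum>i<n. d i x) - (\<Sum>i. d i x)) \<le> \<bar>h\<bar> * e"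
        by (intro mult_left_mono) (auto simp: dist_norm less_imp_le)
      then show "norm ((\<Sum>i<n. h *\<^sub>R d i x) - h *\<^sub>R (\<Sum>i. d i x)) \<le> e * norm h"
        by (simp add: mult.commute flip: scaleR_sum_right scaleR_diff_right)
    qed
  qed (use fd in \<open>auto intro: has_derivative_at_withinI\<close>)
  then obtain g where g: "\<And>x. (\<lambda>n. f n x) sums (g x)"
    "\<And>x. (g has_derivative (\<lambda>h. h *\<^sub>R (\<Sum>i. d i x))) (at x)"
    by auto
  have "g x = harmonic_series b N l x" for x
    using sums_unique[OF g(1)[of x]] by (simp add: harmonic_series_def f_def)
  then have "g = harmonic_series b N l" ..
  then show ?thesis
    using g(2)[of t] unfolding has_vector_derivative_def harmonic_series_def d_def by simp
qed

lemma iter_deriv_harmonic_series: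
  assumes "rapid_decay b N"
  shows "iter_deriv l (harmonic_series b N 0) = harmonic_series b N l"
proof (induction l)
  case (Suc l)
  then show ?case
    using vector_derivative_at[OF has_vector_derivative_harmonic_series[OF assms]] by auto
qed simp

lemma Ck_real_harmonic_series:
  assumes "rapid_decay b N"
  shows "Ck_real k (harmonic_series b N 0)"
  unfolding Ck_real_def iter_deriv_harmonic_series[OF assms]
proof (intro conjI allI impI)
  fix l
  show "continuous_on UNIV (harmonic_series b N l)"
    using has_vector_derivative_harmonic_series[OF assms]
    by (intro differentiable_imp_continuous_on)
       (auto simp: differentiable_on_def differentiable_def has_vector_derivative_def
             intro: has_derivative_at_withinI)
  fix t
  show "(harmonic_series b N l has_vector_derivative harmonic_series b N (Suc l) t) (at t)"
    by (rule has_vector_derivative_harmonic_series[OF assms])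
qed

lemma periodic_2pi_harmonic_series: "periodic_2pi (harmonic_series b N l)"
  using periodic_2pi_harmonic unfolding periodic_2pi_def harmonic_series_def by simp

section \<open>Quantitative real analyticity\<close>

definition coeff_bdd :: "nat \<Rightarrow> (nat \<Rightarrow> complex) set" where
  "coeff_bdd m = {a. \<forall>n. norm (a n) \<le> real m ^ Suc n}"

definition powser_germ :: "nat \<Rightarrow> (real \<Rightarrow> complex) \<Rightarrow> real \<Rightarrow> (nat \<Rightarrow> complex) \<Rightarrow> bool" where
  "powser_germ m h t0 a \<longleftrightarrow> a \<in> coeff_bdd m \<and>
     (\<forall>t. \<bar>t - t0\<bar> < 1 / (2 * real m) \<longrightarrow> (\<lambda>n. a n * of_real ((t - t0) ^ n)) sums h t)"

definition analytic_bdd :: "nat \<Rightarrow> (real \<Rightarrow> complex) \<Rightarrow> bool" where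
  "analytic_bdd m h \<longleftrightarrow> (\<exists>t0\<in>{0..2*pi}. \<exists>a. powser_germ m h t0 a)"

lemma compact_coeff_bdd: "compact (coeff_bdd m)"
proof -
  have eq: "coeff_bdd m = PiE UNIV (\<lambda>n. cball 0 (real m ^ Suc n))"
    unfolding coeff_bdd_def by (auto simp: PiE_def extensional_def)
  have "compactin (product_topology (\<lambda>i. euclidean) UNIV)
          (PiE UNIV (\<lambda>n. cball (0::complex) (real m ^ Suc n)))"
    by (subst compactin_PiE) auto
  then show ?thesis unfolding eq euclidean_product_topology by simp
qed

lemma norm_coeff_bdd_term:
  assumes "a \<in> coeff_bdd m" "norm w \<le> d"
  shows "norm (a n * w ^ n) \<le> real m * (real m * d) ^ n"
proof -
  have "norm (a n * w ^ n) = norm (a n) * norm w ^ n" by (simp add: norm_mult norm_power)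
  also have "\<dots> \<le> real m ^ Suc n * d ^ n"
    using assms unfolding coeff_bdd_def by (intro mult_mono power_mono) auto
  also have "\<dots> = real m * (real m * d) ^ n" by (simp add: power_mult_distrib)
  finally show ?thesis .
qed

lemma coeff_bdd_powser:
  assumes a: "a \<in> coeff_bdd m" and w: "norm w \<le> d" and d: "real m * d < 1"
  shows "summable (\<lambda>n. norm (a n * w ^ n))"
    and "norm (\<Sum>n. a n * w ^ n) \<le> real m / (1 - real m * d)"
proof -
  have "0 \<le> d" using w norm_ge_zero order_trans by blast
  then have geo: "(\<lambda>n. real m * (real m * d) ^ n) sums (real m * (1 / (1 - real m * d)))"
    using d by (intro sums_mult geometric_sums) auto
  show sn: "summable (\<lambda>n. norm (a n * w ^ n))"
    by (rule summable_comparison_test'[OF sums_summable[OF geo]])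
       (use norm_coeff_bdd_term[OF a w] in simp)
  have "norm (\<Sum>n. a n * w ^ n) \<le> (\<Sum>n. norm (a n * w ^ n))" by (rule summable_norm[OF sn])
  also have "\<dots> \<le> (\<Sum>n. real m * (real m * d) ^ n)"
    by (rule suminf_le[OF norm_coeff_bdd_term[OF a w] sn sums_summable[OF geo]])
  finally show "norm (\<Sum>n. a n * w ^ n) \<le> real m / (1 - real m * d)"
    using sums_unique[OF geo] by simp
qed

lemma holomorphic_on_coeff_bdd_powser:
  assumes m: "m > 0" and a: "a \<in> coeff_bdd m"
  shows "(\<lambda>z. \<Sum>n. a n * (z - c) ^ n) holomorphic_on ball c (1 / real m)"
proof -
  define F where "F w = (\<Sum>n. a n * w ^ n)" for w
  have "F field_differentiable at w" if "w \<in> ball 0 (1 / real m)" for w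
  proof -
    have "summable (\<lambda>n. a n * w ^ n)" if "norm w < 1 / real m" for w
      using that m
      by (intro summable_norm_cancel[OF coeff_bdd_powser(1)[OF a order_refl]])
         (simp add: field_simps)
    then show ?thesis
      using termdiffs_strong'[of "1 / real m" a w] that
      unfolding F_def field_differentiable_def by auto
  qed
  then have "F holomorphic_on ball 0 (1 / real m)"
    by (simp add: field_differentiable_at_within holomorphic_on_def)
  moreover have "(\<lambda>z. z - c) holomorphic_on ball c (1 / real m)" by (intro holomorphic_intros)
  moreover have "(\<lambda>z. z - c) ` ball c (1 / real m) \<subseteq> ball 0 (1 / real m)"
    by (auto simp: dist_norm norm_minus_commute)
  ultimately have "(F \<circ> (\<lambda>z. z - c)) holomorphic_on ball c (1 / real m)"
    by (metis holomorphic_on_compose holomorphic_on_subset)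
  then show ?thesis unfolding F_def o_def .
qed

lemma continuous_on_coeff_bdd_powser:
  fixes t \<rho> :: real
  assumes "0 \<le> \<rho>" "real m * \<rho> < 1"
  defines "D \<equiv> {p. \<bar>t - fst p\<bar> \<le> \<rho> \<and> snd p \<in> coeff_bdd m}"
  shows "continuous_on D (\<lambda>p. \<Sum>n. snd p n * of_real ((t - fst p) ^ n))"
proof (rule uniform_limit_theorem)
  have "norm (snd p n * of_real ((t - fst p) ^ n)) \<le> real m * (real m * \<rho>) ^ n"
    if "p \<in> D" for p n
    using norm_coeff_bdd_term[of "snd p" m "of_real (t - fst p)" \<rho> n] that
    unfolding D_def by (simp add: norm_of_real flip: of_real_diff)
  moreover have "summable (\<lambda>n. real m * (real m * \<rho>) ^ n)"
    using assms by (intro summable_mult summable_geometric) auto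
  ultimately show "uniform_limit D (\<lambda>n p. \<Sum>i<n. snd p i * of_real ((t - fst p) ^ i))
      (\<lambda>p. \<Sum>n. snd p n * of_real ((t - fst p) ^ n)) sequentially"
    by (rule Weierstrass_m_test)
  have coord: "continuous_on UNIV (\<lambda>p::real \<times> (nat \<Rightarrow> complex). snd p i)" for i
    by (rule continuous_on_compose2[OF continuous_on_product_coordinates continuous_on_snd]) auto
  show "\<forall>\<^sub>F n in sequentially.
      continuous_on D (\<lambda>p. \<Sum>i<n. snd p i * of_real ((t - fst p) ^ i))"
    by (intro always_eventually allI continuous_intros continuous_on_subset[OF coord]) auto
qed simp

lemma powser_germ_limit:
  assumes m: "m > 0" and germ: "\<And>j. powser_germ m (\<phi> j) (t j) (a j)"
    and t: "t \<longlonglongrightarrow> t0" and a: "a \<longlonglongrightarrow> A" and A: "A \<in> coeff_bdd m"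
    and lim: "\<And>s. (\<lambda>j. \<phi> j s) \<longlonglongrightarrow> \<psi> s"
  shows "powser_germ m \<psi> t0 A"
  unfolding powser_germ_def
proof (intro conjI allI impI A)
  fix s assume s: "\<bar>s - t0\<bar> < 1 / (2 * real m)"
  define \<rho> where "\<rho> = (\<bar>s - t0\<bar> + 1 / (2 * real m)) / 2"
  have \<rho>1: "\<bar>s - t0\<bar> < \<rho>" and \<rho>2: "\<rho> < 1 / (2 * real m)" using s unfolding \<rho>_def by auto
  then have \<rho>: "0 \<le> \<rho>" "real m * \<rho> < 1" using m by (auto simp: field_simps)
  define D where "D = {p. \<bar>s - fst p\<bar> \<le> \<rho> \<and> snd p \<in> coeff_bdd m}"
  define \<Phi> where "\<Phi> p = (\<Sum>n. snd p n * of_real ((s - fst p) ^ n))" for p :: "real \<times> (nat \<Rightarrow> complex)"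
  have ev: "\<forall>\<^sub>F j in sequentially. \<bar>s - t j\<bar> < \<rho>"
    using tendstoD[OF t, of "\<rho> - \<bar>s - t0\<bar>"] \<rho>1
    by (auto elim!: eventually_mono simp: dist_real_def)
  have "(\<lambda>j. \<Phi> (t j, a j)) \<longlonglongrightarrow> \<Phi> (t0, A)"
  proof (rule continuous_on_tendsto_compose[OF _ tendsto_Pair[OF t a]])
    show "continuous_on D \<Phi>" unfolding D_def \<Phi>_def by (rule continuous_on_coeff_bdd_powser[OF \<rho>])
    show "(t0, A) \<in> D" using A \<rho>1 unfolding D_def by auto
    show "\<forall>\<^sub>F j in sequentially. (t j, a j) \<in> D"
      using ev by (rule eventually_mono) (use germ in \<open>auto simp: D_def powser_germ_def\<close>)
  qed
  moreover have "\<forall>\<^sub>F j in sequentially. \<Phi> (t j, a j) = \<phi> j s"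
  proof (rule eventually_mono[OF ev])
    fix j assume "\<bar>s - t j\<bar> < \<rho>"
    then have "\<bar>s - t j\<bar> < 1 / (2 * real m)" using \<rho>2 by linarith
    then show "\<Phi> (t j, a j) = \<phi> j s"
      using germ[of j] unfolding powser_germ_def \<Phi>_def by (simp add: sums_iff)
  qed
  ultimately have "(\<lambda>j. \<phi> j s) \<longlonglongrightarrow> \<Phi> (t0, A)" using tendsto_cong by fastforce
  then have "\<Phi> (t0, A) = \<psi> s" using lim LIMSEQ_unique by blast
  moreover have "summable (\<lambda>n. A n * of_real ((s - t0) ^ n))"
    using summable_norm_cancel[OF coeff_bdd_powser(1)[of A m "of_real (s - t0)" \<rho>]] A \<rho>1 \<rho>
    by (simp add: norm_of_real flip: of_real_diff)
  ultimately show "(\<lambda>n. A n * of_real ((s - t0) ^ n)) sums \<psi> s"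
    unfolding \<Phi>_def by (simp add: sums_iff)
qed

lemma analytic_bdd_pointwise_limit:
  assumes m: "m > 0" and an: "\<And>j. analytic_bdd m (\<phi> j)"
    and lim: "\<And>t. (\<lambda>j. \<phi> j t) \<longlonglongrightarrow> \<psi> t"
  shows "analytic_bdd m \<psi>"
proof -
  have "\<forall>j. \<exists>p. p \<in> {0..2*pi} \<times> coeff_bdd m \<and> powser_germ m (\<phi> j) (fst p) (snd p)"
    using an unfolding analytic_bdd_def powser_germ_def by fastforce
  then obtain x where x: "\<And>j. x j \<in> {0..2*pi} \<times> coeff_bdd m"
    "\<And>j. powser_germ m (\<phi> j) (fst (x j)) (snd (x j))"
    by metis
  have "compact ({0..2*pi} \<times> coeff_bdd m)" by (intro compact_Times compact_coeff_bdd) simp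
  then obtain l r where l: "l \<in> {0..2*pi} \<times> coeff_bdd m" and r: "strict_mono r"
    and lr: "(x \<circ> r) \<longlonglongrightarrow> l"
    using compact_imp_seq_compact x(1) unfolding seq_compact_def by metis
  have "powser_germ m \<psi> (fst l) (snd l)"
  proof (rule powser_germ_limit[where \<phi> = "\<lambda>j. \<phi> (r j)" and t = "\<lambda>j. fst (x (r j))"
        and a = "\<lambda>j. snd (x (r j))", OF m x(2)])
    show "(\<lambda>j. fst (x (r j))) \<longlonglongrightarrow> fst l" "(\<lambda>j. snd (x (r j))) \<longlonglongrightarrow> snd l"
      using tendsto_fst[OF lr] tendsto_snd[OF lr] by (simp_all add: o_def)
    show "(\<lambda>j. \<phi> (r j) s) \<longlonglongrightarrow> \<psi> s" for s
      using LIMSEQ_subseq_LIMSEQ[OF lim r] by (simp add: o_def)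
  qed (use l in auto)
  then show ?thesis using l unfolding analytic_bdd_def by (auto simp: mem_Times_iff)
qed

lemma not_analytic_bdd_stable:
  assumes m: "m > 0" and h: "\<not> analytic_bdd m h"
  shows "\<exists>e>0. \<forall>r. (\<forall>t. norm (r t) < e) \<longrightarrow> \<not> analytic_bdd m (\<lambda>t. h t + r t)"
proof (rule ccontr)
  assume "\<not> ?thesis"
  then have "\<forall>j::nat. \<exists>r. (\<forall>t. norm (r t) < 1 / real (Suc j)) \<and> analytic_bdd m (\<lambda>t. h t + r t)"
    by (metis of_nat_0_less_iff zero_less_Suc zero_less_divide_1_iff)
  then obtain r where r: "\<And>j t. norm (r j t) < 1 / real (Suc j)"
    "\<And>j. analytic_bdd m (\<lambda>t. h t + r j t)"
    by metis
  have "(\<lambda>j. r j t) \<longlonglongrightarrow> 0" for t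
    by (rule Lim_null_comparison[OF _ LIMSEQ_inverse_real_of_nat])
       (use r(1) in \<open>simp add: less_imp_le field_simps\<close>)
  then have "(\<lambda>j. h t + r j t) \<longlonglongrightarrow> h t" for t
    using tendsto_add[OF tendsto_const] by fastforce
  then have "analytic_bdd m h" by (rule analytic_bdd_pointwise_limit[OF m r(2)])
  with h show False ..
qed

text \<open>The Cauchy estimates \<open>|a n| \<le> B / r ^ n\<close> on a disc of radius \<open>r\<close>, with the centre
  moved into \<open>[0, 2*pi]\<close> by periodicity.\<close>
lemma real_analytic_imp_analytic_bdd:
  assumes per: "periodic_2pi h" and \<delta>: "\<delta> > 0"
    and sm: "\<And>t. \<bar>t - t0\<bar> < \<delta> \<Longrightarrow> (\<lambda>n. a n * of_real ((t - t0) ^ n)) sums h t"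
  shows "\<exists>m>0. analytic_bdd m h"
proof -
  obtain n0::int where n0: "t0 - 2 * pi * of_int n0 \<in> {0..<2*pi}"
    using ex_int_shift_into_period by blast
  define t1 where "t1 = t0 - 2 * pi * of_int n0"
  have sm1: "(\<lambda>n. a n * of_real ((t - t1) ^ n)) sums h t" if "\<bar>t - t1\<bar> < \<delta>" for t
  proof -
    have d: "t + 2 * pi * of_int n0 - t0 = t - t1" unfolding t1_def by simp
    have "(\<lambda>n. a n * of_real ((t + 2 * pi * of_int n0 - t0) ^ n)) sums h (t + 2 * pi * of_int n0)"
      by (rule sm) (use d that in simp)
    then show ?thesis unfolding d periodic_2pi_int[OF per] .
  qed
  define r where "r = \<delta> / 2"
  have r: "r > 0" "r < \<delta>" unfolding r_def using \<delta> by auto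
  have "(\<lambda>n. a n * of_real (r ^ n)) \<longlonglongrightarrow> 0"
    using sm1[of "t1 + r"] r by (auto simp: sums_iff intro: summable_LIMSEQ_zero)
  then have "Bseq (\<lambda>n. a n * of_real (r ^ n))" by (rule convergent_imp_Bseq[OF convergentI])
  then obtain B where B: "B > 0" "\<And>n. norm (a n * of_real (r ^ n)) \<le> B"
    by (auto simp: Bseq_def)
  define m :: nat where "m = nat \<lceil>max B (2 / \<delta>)\<rceil> + 1"
  have mB: "B \<le> real m" and m\<delta>: "2 / \<delta> \<le> real m" and mpos: "m > 0"
    unfolding m_def by linarith+
  have "a \<in> coeff_bdd m"
    unfolding coeff_bdd_def
  proof (intro CollectI allI)
    fix n
    have "norm (a n) * r ^ n \<le> B" using B(2)[of n] r by (simp add: norm_mult norm_power)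
    then have "norm (a n) \<le> B * (1 / r) ^ n" using r by (simp add: field_simps)
    also have "\<dots> \<le> real m * real m ^ n"
      using mB m\<delta> B r by (intro mult_mono power_mono) (auto simp: r_def)
    finally show "norm (a n) \<le> real m ^ Suc n" by simp
  qed
  moreover have "1 / (2 * real m) < \<delta>"
    using m\<delta> \<delta> mpos by (simp add: field_simps)
  ultimately have "powser_germ m h t1 a"
    unfolding powser_germ_def using sm1 by auto
  moreover have "t1 \<in> {0..2*pi}" using n0 unfolding t1_def by simp
  ultimately show ?thesis using mpos unfolding analytic_bdd_def by blast
qed

lemma nowhere_real_analytic_iff_not_analytic_bdd:
  assumes "analytic_jordan_curve \<gamma>"
  shows "(\<forall>t0. \<not> real_analytic_at_curve \<gamma> f t0) \<longleftrightarrow> (\<forall>m>0. \<not> analytic_bdd m (\<lambda>t. f (\<gamma> t)))"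
proof
  assume "\<forall>t0. \<not> real_analytic_at_curve \<gamma> f t0"
  then show "\<forall>m>0. \<not> analytic_bdd m (\<lambda>t. f (\<gamma> t))"
    unfolding analytic_bdd_def powser_germ_def real_analytic_at_curve_def
    by (metis divide_pos_pos mult_pos_pos of_nat_0_less_iff zero_less_numeral zero_less_one)
next
  assume "\<forall>m>0. \<not> analytic_bdd m (\<lambda>t. f (\<gamma> t))"
  then show "\<forall>t0. \<not> real_analytic_at_curve \<gamma> f t0"
    using real_analytic_imp_analytic_bdd[OF periodic_2pi_along_curve[OF assms]]
    unfolding real_analytic_at_curve_def by metis
qed

section \<open>The \<open>G\<^sub>\<delta>\<close> property\<close>

definition Ck_not_analytic_bdd :: "enat \<Rightarrow> (real \<Rightarrow> complex) \<Rightarrow> nat \<Rightarrow> (complex \<Rightarrow> complex) set" where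
  "Ck_not_analytic_bdd k \<gamma> m = {f \<in> Ck_curve k \<gamma>. \<not> analytic_bdd m (\<lambda>t. f (\<gamma> t))}"

lemma openin_Ck_not_analytic_bdd:
  assumes \<gamma>: "analytic_jordan_curve \<gamma>" and m: "m > 0"
  shows "openin (Ck_topology k \<gamma>) (Ck_not_analytic_bdd k \<gamma> m)"
  unfolding openin_Ck_topology Ck_open_def
proof (intro conjI ballI)
  show "Ck_not_analytic_bdd k \<gamma> m \<subseteq> Ck_curve k \<gamma>" unfolding Ck_not_analytic_bdd_def by blast
  fix u assume u: "u \<in> Ck_not_analytic_bdd k \<gamma> m"
  then have uC: "u \<in> Ck_curve k \<gamma>" unfolding Ck_not_analytic_bdd_def by blast
  obtain e where e: "e > 0"
    "\<And>r. (\<forall>t. norm (r t) < e) \<Longrightarrow> \<not> analytic_bdd m (\<lambda>t. u (\<gamma> t) + r t)"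
    using not_analytic_bdd_stable[OF m, of "\<lambda>t. u (\<gamma> t)"] u
    unfolding Ck_not_analytic_bdd_def by auto
  have "Ck_nbhd k \<gamma> u 0 e \<subseteq> Ck_not_analytic_bdd k \<gamma> m"
  proof
    fix f assume "f \<in> Ck_nbhd k \<gamma> u 0 e"
    then have fC: "f \<in> Ck_curve k \<gamma>" and sn: "seminorm_curve \<gamma> 0 (\<lambda>z. f z - u z) < e"
      unfolding Ck_nbhd_def by (auto simp flip: zero_enat_def)
    have "continuous_on UNIV (\<lambda>t. f (\<gamma> t) - u (\<gamma> t))"
      using fC uC unfolding Ck_curve_def by (auto intro!: continuous_on_diff dest: Ck_real_imp_continuous)
    then have "\<forall>t. norm (f (\<gamma> t) - u (\<gamma> t)) < e"
      using norm_le_seminorm_curve_0[of "\<lambda>z. f z - u z" \<gamma>] periodic_2pi_along_curve[OF \<gamma>] sn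
      by (fastforce intro: order_le_less_trans)
    then have "\<not> analytic_bdd m (\<lambda>t. u (\<gamma> t) + (f (\<gamma> t) - u (\<gamma> t)))" by (rule e(2))
    then show "f \<in> Ck_not_analytic_bdd k \<gamma> m" using fC unfolding Ck_not_analytic_bdd_def by simp
  qed
  then show "\<exists>N \<epsilon>. 0 < \<epsilon> \<and> Ck_nbhd k \<gamma> u N \<epsilon> \<subseteq> Ck_not_analytic_bdd k \<gamma> m" using e(1) by blast
qed

lemma gdelta_in_Ck_nowhere_real_analytic:
  assumes \<gamma>: "analytic_jordan_curve \<gamma>"
  shows "gdelta_in (Ck_topology k \<gamma>) {f \<in> Ck_curve k \<gamma>. \<forall>t0. \<not> real_analytic_at_curve \<gamma> f t0}"
proof -
  have eq: "{f \<in> Ck_curve k \<gamma>. \<forall>t0. \<not> real_analytic_at_curve \<gamma> f t0} =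
      \<Inter> (Ck_not_analytic_bdd k \<gamma> ` {0<..})"
    using nowhere_real_analytic_iff_not_analytic_bdd[OF \<gamma>]
    unfolding Ck_not_analytic_bdd_def by auto
  show ?thesis
    unfolding eq
    by (rule gdelta_in_Inter) (auto intro: open_imp_gdelta_in openin_Ck_not_analytic_bdd[OF \<gamma>])
qed

section \<open>Perturbation by a single harmonic\<close>

lemma of_real_islimpt_ball:
  assumes "r > 0"
  shows "complex_of_real t islimpt complex_of_real ` ball t r"
  unfolding islimpt_approachable
proof (intro allI impI)
  fix e :: real assume "e > 0"
  define h where "h = min e r / 2"
  have h: "0 < h" "h < e" "h < r" using \<open>e > 0\<close> assms unfolding h_def by (auto simp: min_def)
  then have "of_real (t + h) \<in> complex_of_real ` ball t r" by (intro imageI) (simp add: dist_real_def)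
  with h show "\<exists>x'\<in>complex_of_real ` ball t r. x' \<noteq> of_real t \<and> dist x' (of_real t) < e"
    by (intro bexI[of _ "of_real (t + h)"]) (auto simp: dist_norm norm_of_real)
qed

lemma holomorphic_on_ball_eq_0_if_real_eq_0:
  assumes holo: "H holomorphic_on ball (complex_of_real t) r"
    and real0: "\<And>s. \<bar>s - t\<bar> < r \<Longrightarrow> H (of_real s) = 0"
    and w: "w \<in> ball (complex_of_real t) r"
  shows "H w = 0"
proof -
  have "r > 0" using w by (metis mem_ball zero_le_dist le_less_trans)
  show ?thesis
  proof (rule analytic_continuation[OF holo open_ball connected_ball])
    show "complex_of_real t islimpt complex_of_real ` ball t r"
      using \<open>r > 0\<close> by (rule of_real_islimpt_ball)
    show "complex_of_real ` ball t r \<subseteq> ball (complex_of_real t) r"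
      by (auto simp: dist_norm norm_of_real simp flip: of_real_diff)
    show "H z = 0" if "z \<in> complex_of_real ` ball t r" for z
      using that real0 by (auto simp: dist_real_def abs_minus_commute)
  qed (use \<open>r > 0\<close> w in auto)
qed

text \<open>Both power series continue holomorphically to a complex disc around the real
  segment on which their difference is \<open>(c1 - c2) * harmonic N\<close>.\<close>
lemma powser_germs_diff_eq_harmonic:
  assumes m: "m > 0"
    and germ1: "powser_germ m (\<lambda>t. g t + c1 * harmonic N t) t1 a1"
    and germ2: "powser_germ m (\<lambda>t. g t + c2 * harmonic N t) t2 a2"
    and t12: "\<bar>t1 - t2\<bar> < 1 / (8 * real m)"
    and z: "z \<in> ball (complex_of_real t1) (1 / (4 * real m))"
  shows "(\<Sum>n. a1 n * (z - of_real t1) ^ n) - (\<Sum>n. a2 n * (z - of_real t2) ^ n) =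
    (c1 - c2) * exp (\<i> * of_nat N * z)"
proof -
  have mr: "real m > 0" using m by simp
  have a1: "a1 \<in> coeff_bdd m" and a2: "a2 \<in> coeff_bdd m"
    using germ1 germ2 unfolding powser_germ_def by blast+
  define H where "H z = (\<Sum>n. a1 n * (z - of_real t1) ^ n) - (\<Sum>n. a2 n * (z - of_real t2) ^ n)
      - (c1 - c2) * exp (\<i> * of_nat N * z)" for z
  define S where "S = ball (complex_of_real t1) (1 / (4 * real m))"
  have "S \<subseteq> ball (of_real t1) (1 / real m)"
    unfolding S_def using mr by (intro subset_ball) (simp add: field_simps)
  moreover have "S \<subseteq> ball (of_real t2) (1 / real m)"
  proof
    fix z assume "z \<in> S"
    moreover have "dist (complex_of_real t1) (of_real t2) < 1 / (8 * real m)"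
      using t12 by (simp add: dist_norm norm_of_real flip: of_real_diff)
    ultimately have "dist (complex_of_real t2) z < 1 / (4 * real m) + 1 / (8 * real m)"
      using dist_triangle[of "complex_of_real t2" z "of_real t1"]
      unfolding S_def by (simp add: dist_commute)
    also have "\<dots> \<le> 1 / real m" using mr by (simp add: field_simps)
    finally show "z \<in> ball (of_real t2) (1 / real m)" by simp
  qed
  ultimately have holo: "H holomorphic_on S"
    unfolding H_def
    by (intro holomorphic_intros holomorphic_on_subset[OF holomorphic_on_coeff_bdd_powser[OF m a1]]
        holomorphic_on_subset[OF holomorphic_on_coeff_bdd_powser[OF m a2]])
  have "H (of_real t) = 0" if t: "\<bar>t - t1\<bar> < 1 / (4 * real m)" for t
  proof -
    have "1 / (4 * real m) + 1 / (8 * real m) < 1 / (2 * real m)" using mr by (simp add: field_simps)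
    moreover have "0 < 1 / (8 * real m)" using mr by simp
    ultimately have "\<bar>t - t1\<bar> < 1 / (2 * real m)" "\<bar>t - t2\<bar> < 1 / (2 * real m)"
      using t t12 by linarith+
    then have "(\<Sum>n. a1 n * (of_real t - of_real t1) ^ n) = g t + c1 * harmonic N t"
      "(\<Sum>n. a2 n * (of_real t - of_real t2) ^ n) = g t + c2 * harmonic N t"
      using germ1 germ2 unfolding powser_germ_def by (simp_all add: sums_iff)
    moreover have "harmonic N t = exp (\<i> * of_nat N * of_real t)"
      unfolding harmonic_def by (simp add: algebra_simps)
    ultimately show ?thesis unfolding H_def by (simp add: algebra_simps)
  qed
  then have "H z = 0"
    by (rule holomorphic_on_ball_eq_0_if_real_eq_0[OF holo[unfolded S_def] _ z])
  then show ?thesis unfolding H_def by simp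
qed

text \<open>Evaluate the identity at \<open>z = t1 - \<i> / (8 * m)\<close>, where the exponential is large
  while the series stay bounded.\<close>
lemma powser_germs_harmonic_diff_bound:
  assumes m: "m > 0"
    and germ1: "powser_germ m (\<lambda>t. g t + c1 * harmonic N t) t1 a1"
    and germ2: "powser_germ m (\<lambda>t. g t + c2 * harmonic N t) t2 a2"
    and t12: "\<bar>t1 - t2\<bar> < 1 / (8 * real m)"
  shows "norm (c1 - c2) * exp (real N / (8 * real m)) \<le> 3 * real m"
proof -
  have mr: "real m > 0" using m by simp
  have a1: "a1 \<in> coeff_bdd m" and a2: "a2 \<in> coeff_bdd m"
    using germ1 germ2 unfolding powser_germ_def by blast+
  define s where "s = 1 / (8 * real m)"
  define w where "w = complex_of_real t1 - \<i> * of_real s"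
  have "s > 0" unfolding s_def using mr by simp
  then have "norm (w - of_real t1) = s" unfolding w_def by (simp add: norm_mult)
  then have dw1: "norm (w - of_real t1) = 1 / (8 * real m)" unfolding s_def .
  then have "w \<in> ball (complex_of_real t1) (1 / (4 * real m))"
    using mr by (simp add: dist_norm norm_minus_commute field_simps)
  from powser_germs_diff_eq_harmonic[OF m germ1 germ2 t12 this]
  have Hw: "(c1 - c2) * exp (\<i> * of_nat N * w) =
      (\<Sum>n. a1 n * (w - of_real t1) ^ n) - (\<Sum>n. a2 n * (w - of_real t2) ^ n)" ..
  have "norm (w - of_real t2) \<le> norm (w - of_real t1) + norm (complex_of_real t1 - of_real t2)"
    using norm_triangle_ineq[of "w - of_real t1" "of_real t1 - of_real t2"] by simp
  then have dw2: "norm (w - of_real t2) \<le> 1 / (4 * real m)"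
    using dw1 t12 by (simp add: norm_of_real field_simps flip: of_real_diff)
  have dw1': "norm (w - of_real t1) \<le> 1 / (4 * real m)" using dw1 mr by (simp add: field_simps)
  have md: "real m * (1 / (4 * real m)) < 1" using mr by simp
  have "norm (\<Sum>n. a1 n * (w - of_real t1) ^ n) \<le> real m / (1 - real m * (1 / (4 * real m)))"
    by (rule coeff_bdd_powser(2)[OF a1 dw1' md])
  moreover have "norm (\<Sum>n. a2 n * (w - of_real t2) ^ n) \<le> real m / (1 - real m * (1 / (4 * real m)))"
    by (rule coeff_bdd_powser(2)[OF a2 dw2 md])
  moreover have "real m / (1 - real m * (1 / (4 * real m))) = 4 * real m / 3"
    using mr by (simp add: field_simps)
  ultimately have Qw: "norm (\<Sum>n. a1 n * (w - of_real t1) ^ n) + norm (\<Sum>n. a2 n * (w - of_real t2) ^ n)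
      \<le> 8 * real m / 3" by simp
  have "norm (exp (\<i> * of_nat N * w)) = exp (real N / (8 * real m))"
    unfolding w_def s_def by (simp add: norm_exp_eq_Re algebra_simps)
  then have "norm (c1 - c2) * exp (real N / (8 * real m)) =
      norm ((\<Sum>n. a1 n * (w - of_real t1) ^ n) - (\<Sum>n. a2 n * (w - of_real t2) ^ n))"
    using Hw by (metis norm_mult)
  also have "\<dots> \<le> norm (\<Sum>n. a1 n * (w - of_real t1) ^ n) + norm (\<Sum>n. a2 n * (w - of_real t2) ^ n)"
    by (rule norm_triangle_ineq4)
  finally show ?thesis using Qw mr by simp
qed

lemma ex_close_pair:
  fixes x :: "nat \<Rightarrow> real"
  assumes x: "\<And>i. i \<le> L \<Longrightarrow> x i \<in> {0..a}" and d: "d > 0" and a: "a < real L * d"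
  shows "\<exists>i\<le>L. \<exists>j\<le>L. i \<noteq> j \<and> \<bar>x i - x j\<bar> < d"
proof -
  define f where "f i = nat \<lfloor>x i / d\<rfloor>" for i
  have "f ` {..L} \<subseteq> {..<L}"
  proof
    fix y assume "y \<in> f ` {..L}"
    then obtain i where i: "i \<le> L" "y = f i" by auto
    have "0 \<le> x i / d" "x i / d < real L" using x[OF i(1)] a d by (auto simp: field_simps)
    then have "0 \<le> \<lfloor>x i / d\<rfloor>" "\<lfloor>x i / d\<rfloor> < int L" by (simp_all add: floor_less_iff)
    then show "y \<in> {..<L}" unfolding i(2) f_def by (simp add: nat_less_iff)
  qed
  then have "card (f ` {..L}) < card {..L}"
    using card_mono[of "{..<L}" "f ` {..L}"] by simp
  then obtain i j where ij: "i \<le> L" "j \<le> L" "i \<noteq> j" "f i = f j"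
    using pigeonhole[of f "{..L}"] unfolding inj_on_def by auto
  have "\<lfloor>x i / d\<rfloor> = \<lfloor>x j / d\<rfloor>"
    using ij x[OF ij(1)] x[OF ij(2)] d unfolding f_def by (simp add: nat_eq_iff)
  then have "\<bar>x i / d - x j / d\<bar> < 1" by linarith
  then have "\<bar>x i - x j\<bar> < d" using d by (simp add: field_simps abs_divide flip: diff_divide_distrib)
  then show ?thesis using ij by blast
qed

lemma ex_nat_power_lt_exp:
  assumes s: "s > 0"
  shows "\<exists>N\<ge>1. C * real N ^ M < exp (real N * s)"
proof -
  define c where "c = (s / real (Suc M)) ^ Suc M"
  have c: "c > 0" using s by (simp add: c_def)
  define N :: nat where "N = nat \<lceil>C / c\<rceil> + 1"
  have "C / c < real N" unfolding N_def by linarith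
  then have N: "N \<ge> 1" "C < c * real N" using c by (simp_all add: N_def field_simps)
  have "C * real N ^ M < c * real N * real N ^ M"
    using N by (intro mult_strict_right_mono) auto
  also have "\<dots> = (real N * s / real (Suc M)) ^ Suc M"
    by (simp add: c_def power_mult_distrib field_simps)
  also have "\<dots> \<le> (1 + real N * s / real (Suc M)) ^ Suc M"
    using s by (intro power_mono) auto
  also have "\<dots> \<le> exp (real N * s)"
  proof (rule exp_ge_one_plus_x_over_n_power_n)
    have "0 \<le> real N * s" using s by simp
    then show "- real (Suc M) \<le> real N * s" by linarith
  qed simp
  finally show ?thesis using N by blast
qed

text \<open>Pigeonhole on the centres of the germs.\<close>
lemma ex_pair_harmonic_coeffs_close:
  assumes m: "m > 0" and L: "16 * pi * real m < real L"
    and an: "\<And>i. i \<le> L \<Longrightarrow> analytic_bdd m (\<lambda>t. g t + c i * harmonic N t)"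
  shows "\<exists>i\<le>L. \<exists>j\<le>L. i \<noteq> j \<and> norm (c i - c j) * exp (real N / (8 * real m)) \<le> 3 * real m"
proof -
  have "\<forall>i\<le>L. \<exists>t a. t \<in> {0..2*pi} \<and> powser_germ m (\<lambda>t. g t + c i * harmonic N t) t a"
    using an unfolding analytic_bdd_def by blast
  then obtain t a where t_mem: "\<And>i. i \<le> L \<Longrightarrow> t i \<in> {0..2*pi}"
    and germ: "\<And>i. i \<le> L \<Longrightarrow> powser_germ m (\<lambda>s. g s + c i * harmonic N s) (t i) (a i)"
    by metis
  have "2 * pi < real L * (1 / (8 * real m))" using L m by (simp add: field_simps)
  moreover have "1 / (8 * real m) > 0" using m by simp
  ultimately obtain i j where ij: "i \<le> L" "j \<le> L" "i \<noteq> j" "\<bar>t i - t j\<bar> < 1 / (8 * real m)"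
    using ex_close_pair[where x = t and L = L and a = "2 * pi" and d = "1 / (8 * real m)", OF t_mem]
    by blast
  then show ?thesis
    using powser_germs_harmonic_diff_bound[OF m germ[OF ij(1)] germ[OF ij(2)] ij(4)] by blast
qed

text \<open>Spoiling with one of \<open>L + 1\<close> equally spaced coefficients must succeed: otherwise two of
  them differ by an amount that is exponentially small in \<open>N\<close>.\<close>
lemma ex_harmonic_perturbation_not_analytic_bdd:
  assumes m: "m > 0" and \<eta>: "\<eta> > 0"
  shows "\<exists>b N. N \<ge> 1 \<and> norm b * real N ^ M \<le> \<eta> \<and> \<not> analytic_bdd m (\<lambda>t. g t + b * harmonic N t)"
proof (rule ccontr)
  assume contra: "\<not> ?thesis"
  have mr: "real m > 0" using m by simp
  define L :: nat where "L = nat \<lceil>16 * pi * real m\<rceil> + 1"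
  have L16: "16 * pi * real m < real L" unfolding L_def by linarith
  have "0 \<le> 16 * pi * real m" by simp
  then have Lpos: "real L > 0" using L16 by linarith
  obtain N where N: "N \<ge> 1"
    "3 * real m * real L / \<eta> * real N ^ M < exp (real N * (1 / (8 * real m)))"
    using ex_nat_power_lt_exp[of "1 / (8 * real m)" "3 * real m * real L / \<eta>" M] mr by auto
  have NM: "real N ^ M > 0" using N(1) by simp
  define \<delta> where "\<delta> = \<eta> / real N ^ M"
  define c where "c i = complex_of_real (real i / real L * \<delta>)" for i :: nat
  have "analytic_bdd m (\<lambda>t. g t + c i * harmonic N t)" if "i \<le> L" for i
  proof -
    have nc: "norm (c i) = real i / real L * \<delta>"
      unfolding c_def norm_of_real using Lpos NM \<eta> by (simp add: \<delta>_def)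
    have "norm (c i) * real N ^ M \<le> \<eta>"
      using that Lpos NM \<eta> by (simp add: nc \<delta>_def field_simps)
    then show ?thesis using contra N(1) by blast
  qed
  then obtain i j where ij: "i \<noteq> j"
    and close: "norm (c i - c j) * exp (real N / (8 * real m)) \<le> 3 * real m"
    using ex_pair_harmonic_coeffs_close[OF m L16] by blast
  have "c i - c j = of_real ((real i - real j) / real L * \<delta>)"
    unfolding c_def by (simp add: diff_divide_distrib left_diff_distrib)
  then have "norm (c i - c j) = \<bar>(real i - real j) / real L * \<delta>\<bar>" by (simp only: norm_of_real)
  also have "\<dots> = \<bar>real i - real j\<bar> / real L * \<delta>"
    using \<eta> NM Lpos by (simp add: \<delta>_def abs_mult)
  also have "\<dots> \<ge> \<delta> / real L"
    using ij \<eta> NM Lpos by (simp add: \<delta>_def field_simps)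
  finally have "\<delta> / real L * exp (real N / (8 * real m)) \<le> 3 * real m"
    using close by (meson exp_gt_zero less_imp_le mult_right_mono order_trans)
  then have "\<eta> * exp (real N / (8 * real m)) \<le> 3 * real m * real L * real N ^ M"
    using Lpos NM by (simp add: \<delta>_def field_simps)
  moreover have "3 * real m * real L * real N ^ M < \<eta> * exp (real N / (8 * real m))"
    using N(2) \<eta> by (simp add: field_simps)
  ultimately show False by linarith
qed

lemma ex_harmonic_perturbation_robustly_not_analytic_bdd:
  assumes m: "m > 0" and \<eta>: "\<eta> > 0"
  shows "\<exists>b N e. N \<ge> 1 \<and> e > 0 \<and> norm b * real N ^ M \<le> \<eta> \<and>
    (\<forall>r. (\<forall>t. norm (r t) < e) \<longrightarrow> \<not> analytic_bdd m (\<lambda>t. g t + b * harmonic N t + r t))"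
proof -
  obtain b N where "N \<ge> 1" "norm b * real N ^ M \<le> \<eta>"
    and "\<not> analytic_bdd m (\<lambda>t. g t + b * harmonic N t)"
    using ex_harmonic_perturbation_not_analytic_bdd[OF m \<eta>] by blast
  moreover from not_analytic_bdd_stable[OF m this(3)] obtain e where "e > 0"
    "\<forall>r. (\<forall>t. norm (r t) < e) \<longrightarrow> \<not> analytic_bdd m (\<lambda>t. g t + b * harmonic N t + r t)"
    by blast
  ultimately show ?thesis by blast
qed

section \<open>Density\<close>

lemma norm_harmonic_series_tail_le:
  assumes "decseq \<rho>" and b: "\<And>i. norm (b i) \<le> \<rho> i / 2 ^ Suc i"
  shows "norm (harmonic_series (\<lambda>i. b (i + k)) (\<lambda>i. N (i + k)) 0 t) \<le> \<rho> k / 2 ^ k"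
proof (rule norm_harmonic_series_le)
  fix i
  have "norm (b (i + k)) \<le> \<rho> (i + k) / 2 ^ Suc (i + k)" by (rule b)
  also have "\<dots> \<le> \<rho> k / 2 ^ Suc (i + k)"
    using decseqD[OF \<open>decseq \<rho>\<close>, of k "i + k"] by (simp add: divide_right_mono)
  finally show "norm (b (i + k)) * real (N (i + k)) ^ 0 \<le> \<rho> k / 2 ^ k / 2 ^ Suc i"
    by (simp add: power_add field_simps)
qed

text \<open>A Baire-type construction: the terms are chosen one at a time, the \<open>j\<close>-th one making
  the \<open>j\<close>-th property hold robustly, with margins so small that the tail cannot undo it.\<close>
lemma ex_harmonic_series_satisfying_all:
  fixes P :: "nat \<Rightarrow> (real \<Rightarrow> complex) \<Rightarrow> bool" and g0 :: "real \<Rightarrow> complex"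
  assumes step: "\<And>g j \<rho>. \<rho> > 0 \<Longrightarrow> \<exists>b N e. N \<ge> 1 \<and> e > 0 \<and>
      norm b * real N ^ max M j \<le> \<rho> / 2 ^ Suc j \<and>
      (\<forall>r. (\<forall>t. norm (r t) < e) \<longrightarrow> P j (\<lambda>t. g t + b * harmonic N t + r t))"
    and \<epsilon>: "\<epsilon> > 0"
  shows "\<exists>b N. (\<forall>i. N i \<ge> 1 \<and> norm (b i) * real (N i) ^ max M i \<le> \<epsilon> / 2 ^ Suc i) \<and>
           (\<forall>j. P j (\<lambda>t. g0 t + harmonic_series b N 0 t))"
proof -
  define good where "good g j \<rho> p \<longleftrightarrow> (case p of (b, N, e) \<Rightarrow> N \<ge> 1 \<and> e > 0 \<and>
      norm b * real N ^ max M j \<le> \<rho> / 2 ^ Suc j \<and>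
      (\<forall>r. (\<forall>t. norm (r t) < e) \<longrightarrow> P j (\<lambda>t. g t + b * harmonic N t + r t)))"
    for g j \<rho> and p :: "complex \<times> nat \<times> real"
  define sel where "sel g j \<rho> = (SOME p. good g j \<rho> p)" for g j \<rho>
  have sel: "good g j \<rho> (sel g j \<rho>)" if \<rho>: "\<rho> > 0" for g j \<rho>
  proof -
    obtain b N e where "good g j \<rho> (b, N, e)"
      using step[where g = g and j = j, OF \<rho>] unfolding good_def by auto
    then show ?thesis unfolding sel_def by (rule someI)
  qed
  \<comment> \<open>state after \<open>j\<close> steps: the partial sum \<open>G j\<close> and the margin \<open>\<rho> j\<close> left for later terms\<close>
  define state where "state = rec_nat (g0, \<epsilon>) (\<lambda>j s. case sel (fst s) j (snd s) of (b, N, e) \<Rightarrow>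
      ((\<lambda>t. fst s t + b * harmonic N t), min (snd s) e))"
  define G where "G j = fst (state j)" for j
  define \<rho> where "\<rho> j = snd (state j)" for j
  define b where "b j = fst (sel (G j) j (\<rho> j))" for j
  define N where "N j = fst (snd (sel (G j) j (\<rho> j)))" for j
  define e where "e j = snd (snd (sel (G j) j (\<rho> j)))" for j
  have G0: "G 0 = g0" and \<rho>0: "\<rho> 0 = \<epsilon>"
    and GS: "G (Suc j) = (\<lambda>t. G j t + b j * harmonic (N j) t)"
    and \<rho>S: "\<rho> (Suc j) = min (\<rho> j) (e j)" for j
    by (simp_all add: G_def \<rho>_def b_def N_def e_def state_def split: prod.split)
  have sel_j: "good (G j) j (\<rho> j) (b j, N j, e j)" if "\<rho> j > 0" for j
    using sel[OF that] by (simp add: b_def N_def e_def)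
  have \<rho>pos: "\<rho> j > 0" for j
    by (induction j) (use \<epsilon> sel_j in \<open>auto simp: \<rho>0 \<rho>S good_def\<close>)
  have N1: "N j \<ge> 1" and bnd: "norm (b j) * real (N j) ^ max M j \<le> \<rho> j / 2 ^ Suc j"
    and spoil: "\<And>r. (\<forall>t. norm (r t) < \<rho> (Suc j)) \<Longrightarrow> P j (\<lambda>t. G j t + b j * harmonic (N j) t + r t)"
    for j
    using sel_j[OF \<rho>pos[of j]] unfolding good_def \<rho>S by auto
  have "decseq \<rho>" by (rule decseq_SucI) (simp add: \<rho>S)
  have "norm (b i) \<le> norm (b i) * real (N i) ^ max M i" for i
    using N1[of i] by (intro mult_le_cancel_left1[THEN iffD2] impI one_le_power) auto
  then have nb: "norm (b i) \<le> \<rho> i / 2 ^ Suc i" for i using bnd[of i] by (meson order_trans)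
  have \<rho>_le: "\<rho> i / 2 ^ Suc i \<le> \<epsilon> / 2 ^ Suc i" for i
    using decseqD[OF \<open>decseq \<rho>\<close>, of 0 i] \<rho>0 by (simp add: divide_right_mono)
  have "P j (\<lambda>t. g0 t + harmonic_series b N 0 t)" for j
  proof -
    define r where "r = harmonic_series (\<lambda>i. b (i + Suc j)) (\<lambda>i. N (i + Suc j)) 0"
    have "norm (r t) \<le> \<rho> (Suc j) / 2 ^ Suc j" for t
      unfolding r_def by (rule norm_harmonic_series_tail_le[OF \<open>decseq \<rho>\<close> nb])
    also have "\<dots> < \<rho> (Suc j)"
      using \<rho>pos[of "Suc j"] one_less_power[of "2::real" "Suc j"] by (simp add: divide_less_eq)
    finally have r_small: "\<forall>t. norm (r t) < \<rho> (Suc j)" by blast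
    have "summable (\<lambda>i. norm (b i))"
      by (rule summable_if_le_half_powers[of 0 _ \<epsilon>]) (use nb \<rho>_le in \<open>auto intro: order_trans\<close>)
    then have "harmonic_series b N 0 t = (\<Sum>i<Suc j. b i * harmonic (N i) t) + r t" for t
      unfolding r_def by (rule harmonic_series_0_split)
    moreover have "G j t = g0 t + (\<Sum>i<j. b i * harmonic (N i) t)" for t
      by (induction j) (simp_all add: G0 GS)
    ultimately have "(\<lambda>t. g0 t + harmonic_series b N 0 t) = (\<lambda>t. G j t + b j * harmonic (N j) t + r t)"
      by (simp add: algebra_simps)
    then show ?thesis using spoil[OF r_small] by simp
  qed
  then show ?thesis using N1 bnd \<rho>_le by (blast intro: order_trans)
qed

lemma ex_Ck_nowhere_real_analytic_near:
  assumes \<gamma>: "analytic_jordan_curve \<gamma>" and u: "u \<in> Ck_curve k \<gamma>" and \<epsilon>: "\<epsilon> > 0"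
  shows "\<exists>v \<in> Ck_nbhd k \<gamma> u M \<epsilon>. \<forall>t0. \<not> real_analytic_at_curve \<gamma> v t0"
proof -
  have "\<exists>b N. (\<forall>i. N i \<ge> 1 \<and> norm (b i) * real (N i) ^ max M i \<le> \<epsilon> / 2 / 2 ^ Suc i) \<and>
      (\<forall>j. \<not> analytic_bdd (Suc j) (\<lambda>t. u (\<gamma> t) + harmonic_series b N 0 t))"
    by (rule ex_harmonic_series_satisfying_all[where P = "\<lambda>j h. \<not> analytic_bdd (Suc j) h"],
        rule ex_harmonic_perturbation_robustly_not_analytic_bdd) (use \<epsilon> in simp_all)
  then obtain b N where N: "\<And>i. N i \<ge> 1"
    and b: "\<And>i. norm (b i) * real (N i) ^ max M i \<le> \<epsilon> / 2 / 2 ^ Suc i"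
    and nowhere: "\<And>j. \<not> analytic_bdd (Suc j) (\<lambda>t. u (\<gamma> t) + harmonic_series b N 0 t)"
    by blast
  have decay: "rapid_decay b N" by (rule rapid_decay_if_le_half_powers[OF N b])
  define g where "g t = u (\<gamma> t) + harmonic_series b N 0 t" for t
  have "periodic_2pi g"
    using periodic_2pi_along_curve[OF \<gamma>, of u] periodic_2pi_harmonic_series[of b N 0]
    unfolding g_def periodic_2pi_def by simp
  moreover have "Ck_real k g"
    unfolding g_def using u Ck_real_harmonic_series[OF decay]
    by (intro Ck_real_add) (auto simp: Ck_curve_def)
  ultimately have vC: "curve_lift \<gamma> g \<in> Ck_curve k \<gamma>"
    and vg: "\<And>t. curve_lift \<gamma> g (\<gamma> t) = g t"
    using curve_lift_in_Ck_curve[OF \<gamma>] curve_lift_along_curve[OF \<gamma>] by auto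
  have "curve_lift \<gamma> g \<in> Ck_nbhd k \<gamma> u M \<epsilon>"
    unfolding Ck_nbhd_def
  proof (intro CollectI conjI allI impI vC)
    fix l assume "l \<le> M \<and> enat l \<le> k"
    then have "norm (b i) * real (N i) ^ l \<le> \<epsilon> / 2 / 2 ^ Suc i" for i
      by (intro order_trans[OF norm_mult_power_mono[OF N] b]) auto
    then have "norm (harmonic_series b N l \<theta>) \<le> \<epsilon> / 2" for \<theta>
      by (rule norm_harmonic_series_le)
    moreover have "(\<lambda>t. curve_lift \<gamma> g (\<gamma> t) - u (\<gamma> t)) = harmonic_series b N 0"
      by (simp add: vg g_def)
    ultimately have "seminorm_curve \<gamma> l (\<lambda>z. curve_lift \<gamma> g z - u z) \<le> \<epsilon> / 2"
      by (intro seminorm_curve_le) (simp add: iter_deriv_harmonic_series[OF decay])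
    then show "seminorm_curve \<gamma> l (\<lambda>z. curve_lift \<gamma> g z - u z) < \<epsilon>" using \<epsilon> by simp
  qed
  moreover have "\<forall>t0. \<not> real_analytic_at_curve \<gamma> (curve_lift \<gamma> g) t0"
    unfolding nowhere_real_analytic_iff_not_analytic_bdd[OF \<gamma>] vg g_def
    using nowhere by (metis gr0_implies_Suc)
  ultimately show ?thesis by blast
qed

theorem theorem5p11:
  fixes \<gamma> :: "real \<Rightarrow> complex" and k :: enat
  assumes "analytic_jordan_curve \<gamma>"
  defines "S \<equiv> {f \<in> Ck_curve k \<gamma>. \<forall>t0. \<not> real_analytic_at_curve \<gamma> f t0}"
  shows "gdelta_in (Ck_topology k \<gamma>) S \<and> (Ck_topology k \<gamma>) closure_of S = topspace (Ck_topology k \<gamma>)"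
proof
  show "gdelta_in (Ck_topology k \<gamma>) S"
    unfolding S_def by (rule gdelta_in_Ck_nowhere_real_analytic[OF assms(1)])
  have "u \<in> Ck_topology k \<gamma> closure_of S" if u: "u \<in> Ck_curve k \<gamma>" for u
    unfolding in_closure_of topspace_Ck_topology
  proof (intro conjI allI impI u)
    fix T assume "u \<in> T \<and> openin (Ck_topology k \<gamma>) T"
    then obtain M \<epsilon> where "0 < \<epsilon>" "Ck_nbhd k \<gamma> u M \<epsilon> \<subseteq> T"
      unfolding openin_Ck_topology Ck_open_def by blast
    with ex_Ck_nowhere_real_analytic_near[OF assms(1) u] show "\<exists>v. v \<in> S \<and> v \<in> T"
      unfolding S_def Ck_nbhd_def by blast
  qed
  then show "Ck_topology k \<gamma> closure_of S = topspace (Ck_topology k \<gamma>)"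
    using closure_of_subset_topspace[of "Ck_topology k \<gamma>" S] by (auto simp: topspace_Ck_topology)
qed

end
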